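(* Let $x=(x_k)_{k\in\mathbb{Z}}$ be a sequence with $x_k\in\{-1,0,1,2,\dots\}$ for all $k$, let $T$ be its record graph, and let $i\in\mathbb{Z}$. If $t_x(i)=-1$, then the number of children of $i$ in $T$ is $d_1(i,T)=x_{i-1}+1$. If $t_x(i)\ge0$, then $d_1(i,T)=x_{i-1}+1-t_x(i)$.
   Context: Write $y(j,k)=\sum_{l=j}^{k-1}x_l$ for $j<k$. The record map is $R_x(i)=\inf\{n>i: y(i,n)\ge0\}$ if this set is nonempty, and $R_x(i)=i$ otherwise; the record graph has vertex set $\mathbb{Z}$ and directed edges $i\to R_x(i)$ for $R_x(i)\ne i$; the children of $i$ are the $j\ne i$ with $R_x(j)=i$. The type of $i$ is $t_x(i)=\inf\{\max(y(m,i),-1): m<i\}\in\{-1,0,1,\dots\}$. *)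

theory Defs
  imports Main
begin

definition ysum :: "(int \<Rightarrow> int) \<Rightarrow> int \<Rightarrow> int \<Rightarrow> int" where
  "ysum x j k = (\<Sum>l\<in>{j..<k}. x l)"

definition record_map :: "(int \<Rightarrow> int) \<Rightarrow> int \<Rightarrow> int" where
  "record_map x i = (if (\<exists>n>i. ysum x i n \<ge> 0)
                     then Inf {n. n > i \<and> ysum x i n \<ge> 0} else i)"

definition children :: "(int \<Rightarrow> int) \<Rightarrow> int \<Rightarrow> int set" where
  "children x i = {j. j \<noteq> i \<and> record_map x j = i}"

definition rtype :: "(int \<Rightarrow> int) \<Rightarrow> int \<Rightarrow> int" where
  "rtype x i = Inf {max (ysum x m i) (-1) | m. m < i}"

end

theory Submission
  imports Defs
begin

text \<open>
  Write \<open>S j = y(j,i)\<close> for the suffix sums ending at \<open>i\<close>. The first time \<open>y(j,n)\<close> becomes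
  nonnegative is the first \<open>n\<close> with \<open>S n \<le> S j\<close>, so \<open>j\<close> is a child of \<open>i\<close> exactly when
  \<open>S j \<ge> 0\<close> and \<open>S j\<close> is a strict new minimum of the suffix sums read leftwards from \<open>i\<close>.
  Hence \<open>S\<close> is injective on the children, with values in \<open>[0, x(i-1)]\<close>. Because every
  \<open>x k \<ge> -1\<close>, the suffix sums descend leftwards without skipping levels, starting at
  \<open>S (i-1) = x(i-1)\<close>; so every level down to \<open>max 0 (t x i)\<close> is a new minimum at some
  child, and no nonnegative level below the type \<open>t x i\<close> is ever reached.
\<close>

lemma Inf_int_in:
  fixes X :: "int set"
  assumes "X \<noteq> {}" "bdd_below X"
  shows "Inf X \<in> X"
proof -
  obtain y where y: "y \<in> X" "y < Inf X + 1"
    using cInf_less_iff[OF assms, of "Inf X + 1"] by auto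
  moreover have "Inf X \<le> y" using cInf_lower[OF y(1) assms(2)] .
  ultimately have "y = Inf X" by simp
  with y show ?thesis by simp
qed

lemma ysum_split:
  assumes "j \<le> n" "n \<le> k"
  shows "ysum x j k = ysum x j n + ysum x n k"
proof -
  have "{j..<k} = {j..<n} \<union> {n..<k}" using assms by auto
  then show ?thesis unfolding ysum_def by (simp add: sum.union_disjoint)
qed

lemma ysum_singleton: "ysum x j (j + 1) = x j"
proof -
  have "{j..<j + 1} = {j}" by auto
  then show ?thesis unfolding ysum_def by simp
qed

lemma ysum_last: "ysum x (k - 1) k = x (k - 1)"
  using ysum_singleton[of x "k - 1"] by simp

lemma ysum_Suc_left:
  assumes "j < k"
  shows "ysum x j k = x j + ysum x (j + 1) k"
  using ysum_split[of j "j + 1" k x] assms by (simp add: ysum_singleton)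

lemma record_map_ge: "j \<le> record_map x j"
proof (cases "\<exists>n>j. ysum x j n \<ge> 0")
  case True
  let ?S = "{n. n > j \<and> ysum x j n \<ge> 0}"
  have "Inf ?S \<in> ?S"
    using True by (intro Inf_int_in) (auto intro: bdd_belowI[of _ j])
  with True show ?thesis unfolding record_map_def by simp
next
  case False
  then show ?thesis unfolding record_map_def by auto
qed

lemma record_map_eq_iff:
  assumes "j < i"
  shows "record_map x j = i \<longleftrightarrow> 0 \<le> ysum x j i \<and> (\<forall>n\<in>{j<..<i}. ysum x j n < 0)"
proof -
  let ?S = "{n. n > j \<and> ysum x j n \<ge> 0}"
  have bdd: "bdd_below ?S" by (auto intro: bdd_belowI[of _ j])
  show ?thesis
  proof
    assume r: "record_map x j = i"
    then have ex: "\<exists>n>j. ysum x j n \<ge> 0"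
      using assms unfolding record_map_def by (auto split: if_splits)
    with r have i: "Inf ?S = i" unfolding record_map_def by simp
    have "i \<in> ?S" using Inf_int_in[OF _ bdd] ex i by auto
    moreover have "ysum x j n < 0" if "n \<in> {j<..<i}" for n
      using that cInf_lower[OF _ bdd, of n] i by force
    ultimately show "0 \<le> ysum x j i \<and> (\<forall>n\<in>{j<..<i}. ysum x j n < 0)" by auto
  next
    assume a: "0 \<le> ysum x j i \<and> (\<forall>n\<in>{j<..<i}. ysum x j n < 0)"
    have "Inf ?S = i"
    proof (rule cInf_eq_minimum)
      show "i \<in> ?S" using a assms by auto
      show "i \<le> n" if "n \<in> ?S" for n
        using that a by (metis greaterThanLessThan_iff linorder_not_le mem_Collect_eq not_less)
    qed
    then show "record_map x j = i"
      using a assms unfolding record_map_def by auto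
  qed
qed

lemma mem_children_iff:
  "j \<in> children x i \<longleftrightarrow>
     j < i \<and> 0 \<le> ysum x j i \<and> (\<forall>n\<in>{j<..<i}. ysum x j i < ysum x n i)"
proof (cases "j < i")
  case True
  have "ysum x j i = ysum x j n + ysum x n i" if "n \<in> {j<..<i}" for n
    using that by (intro ysum_split) auto
  then show ?thesis
    using True record_map_eq_iff[OF True, of x] unfolding children_def by force
next
  case False
  then show ?thesis
    using record_map_ge[of j x] unfolding children_def by auto
qed

lemma inj_on_ysum_children: "inj_on (\<lambda>j. ysum x j i) (children x i)"
proof (rule inj_onI)
  fix j j' assume "j \<in> children x i" "j' \<in> children x i" "ysum x j i = ysum x j' i"
  then show "j = j'"
    unfolding mem_children_iff by (metis greaterThanLessThan_iff less_irrefl linorder_neqE)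
qed

lemma ysum_child_le:
  assumes "j \<in> children x i"
  shows "ysum x j i \<le> x (i - 1)"
proof -
  have "j < i" "\<forall>n\<in>{j<..<i}. ysum x j i < ysum x n i"
    using assms unfolding mem_children_iff by auto
  then show ?thesis
    using ysum_last[of x i] by (cases "j = i - 1") (auto dest: bspec[of _ _ "i - 1"])
qed

text \<open>
  The child is the rightmost position \<open>j\<close> (at or after \<open>m\<close>) with suffix sum at most \<open>v\<close>;
  since suffix sums drop by at most one per step to the left, its suffix sum is exactly \<open>v\<close>.
\<close>

lemma child_with_ysum:
  assumes step: "\<And>k. x k \<ge> -1"
    and v: "0 \<le> v" "v \<le> x (i - 1)"
    and m: "m < i" "ysum x m i \<le> v"
  shows "\<exists>j\<in>children x i. ysum x j i = v"
proof -
  let ?M = "{n \<in> {m..<i}. ysum x n i \<le> v}"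
  define j where "j = Max ?M"
  have fin: "finite ?M" by (rule finite_subset[of _ "{m..<i}"]) auto
  moreover have "m \<in> ?M" using m by auto
  ultimately have j: "j \<in> ?M" unfolding j_def by (intro Max_in) auto
  have above: "v < ysum x n i" if n: "n \<in> {j<..<i}" for n
  proof (rule ccontr)
    assume "\<not> v < ysum x n i"
    with n j have "n \<in> ?M" by auto
    with fin have "n \<le> j" unfolding j_def by (rule Max_ge)
    with n show False by auto
  qed
  have "ysum x j i = v"
  proof (cases "j = i - 1")
    case True
    then show ?thesis using j v ysum_last[of x i] by auto
  next
    case False
    then have "v < ysum x (j + 1) i" using j above by auto
    then show ?thesis using j step[of j] ysum_Suc_left[of j i x] by auto
  qed
  moreover from this have "j \<in> children x i"
    unfolding mem_children_iff using j above v by auto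
  ultimately show ?thesis by blast
qed

lemma rtype_le:
  assumes "m < i"
  shows "rtype x i \<le> max (ysum x m i) (-1)"
  unfolding rtype_def
  by (rule cInf_lower) (use assms in \<open>auto intro: bdd_belowI[of _ "-1"]\<close>)

lemma rtype_attained: "\<exists>m<i. max (ysum x m i) (-1) = rtype x i"
proof -
  let ?T = "{max (ysum x m i) (-1) | m. m < i}"
  have "?T \<noteq> {}" by (auto intro: exI[of _ "i - 1"])
  moreover have "bdd_below ?T" by (auto intro: bdd_belowI[of _ "-1"])
  ultimately have "rtype x i \<in> ?T" unfolding rtype_def by (rule Inf_int_in)
  then show ?thesis by auto
qed

lemma ysum_children_image:
  assumes step: "\<And>k. x k \<ge> -1"
  shows "(\<lambda>j. ysum x j i) ` children x i = {max 0 (rtype x i)..x (i - 1)}"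
proof (intro equalityI subsetI)
  fix v assume "v \<in> (\<lambda>j. ysum x j i) ` children x i"
  then obtain j where j: "j \<in> children x i" "v = ysum x j i" by auto
  then have "j < i" "0 \<le> v" unfolding mem_children_iff by auto
  then show "v \<in> {max 0 (rtype x i)..x (i - 1)}"
    using rtype_le[of j i x] ysum_child_le[OF j(1)] j(2) by auto
next
  fix v assume v: "v \<in> {max 0 (rtype x i)..x (i - 1)}"
  obtain m where "m < i" "max (ysum x m i) (-1) = rtype x i"
    using rtype_attained by blast
  with v have "\<exists>j\<in>children x i. ysum x j i = v"
    by (intro child_with_ysum[OF step, where v = v and i = i and m = m]) auto
  then show "v \<in> (\<lambda>j. ysum x j i) ` children x i" by auto
qed

lemma card_children:
  assumes step: "\<And>k. x k \<ge> -1"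
  shows "finite (children x i)
    \<and> int (card (children x i)) = x (i - 1) + 1 - max 0 (rtype x i)"
proof -
  have image: "(\<lambda>j. ysum x j i) ` children x i = {max 0 (rtype x i)..x (i - 1)}"
    using ysum_children_image[OF step] .
  have "rtype x i \<le> x (i - 1)"
    using rtype_le[of "i - 1" i x] step[of "i - 1"] ysum_last[of x i] by simp
  then have "int (card {max 0 (rtype x i)..x (i - 1)}) = x (i - 1) + 1 - max 0 (rtype x i)"
    using step[of "i - 1"] by auto
  moreover have "card (children x i) = card {max 0 (rtype x i)..x (i - 1)}"
    using card_image[OF inj_on_ysum_children] image by metis
  moreover have "finite (children x i)"
    using finite_imageD[OF _ inj_on_ysum_children] image by (metis finite_atLeastAtMost_int)
  ultimately show ?thesis by simp
qed

theorem lemma4p5: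
  fixes x :: "int \<Rightarrow> int" and i :: int
  assumes "\<And>k. x k \<ge> -1"
  shows "(rtype x i = -1 \<longrightarrow>
            finite (children x i) \<and> int (card (children x i)) = x (i - 1) + 1)
       \<and> (rtype x i \<ge> 0 \<longrightarrow>
            finite (children x i) \<and> int (card (children x i)) = x (i - 1) + 1 - rtype x i)"
  using card_children[OF assms] by auto

end
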